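(* Let $V$ be a Lévy measure. Set $\mathcal{A}_{sym}=\emptyset$ if $V$ is symmetric and $\mathcal{A}_{sym}=\{1\}$ otherwise. Let $0<p\le q\le2$, $\mathcal{A}=\{p,q\}\cup\mathcal{A}_{sym}$, $p_{\min}=\min\mathcal{A}$, $p_{\max}=\max\mathcal{A}$, and assume $V\in\mathscr{M}(p_{\min},p_{\max})$. Define $g(\omega)=\int_{\mathbb{R}\setminus\{0\}}\left(\mathrm{e}^{\mathrm{j}\omega a}-1-\mathrm{j}\omega a\mathbb{1}_{|a|<1}\right)V(\mathrm{d}a)$. Then there exist constants $\kappa_1,\kappa_2\ge0$ such that for all $\omega\in\mathbb{R}$, $|g(\omega)|\le\kappa_1|\omega|^{p_{\min}}+\kappa_2|\omega|^{p_{\max}}$.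
   Context: A Lévy measure is a Radon measure $V$ on $\mathbb{R}\setminus\{0\}$ with $\int\min(1,a^2)V(\mathrm{d}a)<\infty$; it is symmetric if $V(B)=V(-B)$ for all Borel $B$. $\mathscr{M}(p,q)$ is the set of Radon measures $V$ on $\mathbb{R}\setminus\{0\}$ with $\int_{0<|a|<1}|a|^qV(\mathrm{d}a)<\infty$ and $\int_{|a|\ge1}|a|^pV(\mathrm{d}a)<\infty$. *)

theory Defs
  imports "HOL-Analysis.Analysis"
begin

text \<open>Measures on the real line that do not charge the origin stand for
  measures on R minus 0.  A Levy measure: Borel measure V with V{0}=0 and
  integral of min(1,a^2) finite (this implies local finiteness on R minus 0,
  i.e. the Radon property there).\<close>
definition levy_measure :: "real measure \<Rightarrow> bool" where
  "levy_measure V \<longleftrightarrow> sets V = sets borel \<and> emeasure V {0} = 0 \<and>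
     (\<forall>e>0. emeasure V {a. e \<le> \<bar>a\<bar>} < \<infinity>) \<and>
     (\<integral>\<^sup>+ a. ennreal (min 1 (a\<^sup>2)) \<partial>V) < \<infinity>"

definition symmetric_measure :: "real measure \<Rightarrow> bool" where
  "symmetric_measure V \<longleftrightarrow> (\<forall>B \<in> sets borel. emeasure V B = emeasure V (uminus ` B))"

definition M_class :: "real \<Rightarrow> real \<Rightarrow> real measure set" where
  "M_class p q = {V. sets V = sets borel \<and> emeasure V {0} = 0 \<and>
     (\<forall>e>0. emeasure V {a. e \<le> \<bar>a\<bar>} < \<infinity>) \<and>
     (\<integral>\<^sup>+ a. ennreal (indicator {a. 0 < \<bar>a\<bar> \<and> \<bar>a\<bar> < 1} a * \<bar>a\<bar> powr q) \<partial>V) < \<infinity> \<and>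
     (\<integral>\<^sup>+ a. ennreal (indicator {a. 1 \<le> \<bar>a\<bar>} a * \<bar>a\<bar> powr p) \<partial>V) < \<infinity>}"

definition levy_exponent :: "real measure \<Rightarrow> real \<Rightarrow> complex" where
  "levy_exponent V \<omega> = (LINT a|V. cis (\<omega> * a) - 1
       - \<i> * complex_of_real (\<omega> * a * indicator {a. \<bar>a\<bar> < 1} a))"

end

theory Submission
  imports Defs "HOL-Probability.Characteristic_Functions"
begin

text \<open>On small jumps the integrand is at most \<open>(\<omega> a)\<^sup>2/2\<close> and \<open>2 + |\<omega> a|\<close>, on large jumps
  at most \<open>|\<omega> a|\<close> and \<open>2\<close>.  Interpolating, it is bounded by \<open>3 |\<omega> a|\<^sup>r\<close> on small jumps for
  \<open>1 \<le> r \<le> 2\<close> and on large jumps for \<open>0 \<le> r \<le> 1\<close>; this is why \<open>1\<close> has to lie between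
  \<open>p\<^sub>m\<^sub>i\<^sub>n\<close> and \<open>p\<^sub>m\<^sub>a\<^sub>x\<close>.  For symmetric \<open>V\<close> the integrand may be replaced by its even part
  \<open>cos (\<omega> a) - 1\<close>, bounded by \<open>(\<omega> a)\<^sup>2/2\<close> and \<open>2\<close>, so every \<open>r \<in> [0, 2]\<close> works on both
  sides.  Taking \<open>r = p\<^sub>m\<^sub>a\<^sub>x\<close> on small and \<open>r = p\<^sub>m\<^sub>i\<^sub>n\<close> on large jumps, the two moment
  conditions of \<open>M(p\<^sub>m\<^sub>i\<^sub>n, p\<^sub>m\<^sub>a\<^sub>x)\<close> make the bound integrable.\<close>

lemma norm_cis_minus_one_le:
  fixes x :: real
  shows "cmod (cis x - 1) \<le> \<bar>x\<bar>"
  using iexp_approx1[of x 0] by (simp add: cis_conv_exp)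

lemma norm_cis_minus_one_le_two:
  fixes x :: real
  shows "cmod (cis x - 1) \<le> 2"
  using norm_triangle_ineq4[of "cis x" 1] by simp

lemma norm_cis_minus_one_minus_linear_le:
  fixes x :: real
  shows "cmod (cis x - 1 - \<i> * complex_of_real x) \<le> x\<^sup>2 / 2"
  using iexp_approx1[of x 1] by (simp add: cis_conv_exp power2_eq_square diff_diff_eq)

lemma abs_cos_minus_one_le:
  fixes x :: real
  shows "\<bar>cos x - 1\<bar> \<le> x\<^sup>2 / 2"
  using abs_Re_le_cmod[of "cis x - 1 - \<i> * complex_of_real x"] norm_cis_minus_one_minus_linear_le[of x]
  by simp

lemma le_powr_interpolate:
  fixes x z c r s t :: real
  assumes "t \<le> r" "r \<le> s" "0 \<le> c"
    and small: "\<bar>x\<bar> \<le> 1 \<Longrightarrow> z \<le> c * \<bar>x\<bar> powr s"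
    and large: "1 \<le> \<bar>x\<bar> \<Longrightarrow> z \<le> c * \<bar>x\<bar> powr t"
  shows "z \<le> c * \<bar>x\<bar> powr r"
proof (cases "\<bar>x\<bar> \<le> 1")
  case True
  then have "\<bar>x\<bar> powr s \<le> \<bar>x\<bar> powr r" using powr_mono' assms(2) by simp
  then show ?thesis using small True assms(3) by (meson mult_left_mono order_trans)
next
  case False
  then have "\<bar>x\<bar> powr t \<le> \<bar>x\<bar> powr r" using powr_mono assms(1) by simp
  then show ?thesis using large False assms(3) by (meson mult_left_mono order_trans linear)
qed

definition large_jump_weight :: "real \<Rightarrow> real \<Rightarrow> real" where
  "large_jump_weight p a = indicator {a. 1 \<le> \<bar>a\<bar>} a * \<bar>a\<bar> powr p"

definition small_jump_weight :: "real \<Rightarrow> real \<Rightarrow> real" where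
  "small_jump_weight q a = indicator {a. 0 < \<bar>a\<bar> \<and> \<bar>a\<bar> < 1} a * \<bar>a\<bar> powr q"

lemma large_jump_weight_nonneg: "0 \<le> large_jump_weight p a"
  by (simp add: large_jump_weight_def)

lemma small_jump_weight_nonneg: "0 \<le> small_jump_weight q a"
  by (simp add: small_jump_weight_def)

lemma M_class_integrable_jump_weights:
  assumes "V \<in> M_class p q"
  shows "integrable V (large_jump_weight p)" "integrable V (small_jump_weight q)"
proof -
  have sets: "sets V = sets borel" using assms by (simp add: M_class_def)
  have "large_jump_weight p \<in> borel_measurable V" "small_jump_weight q \<in> borel_measurable V"
    unfolding large_jump_weight_def small_jump_weight_def measurable_cong_sets[OF sets refl]
    by measurable
  then show "integrable V (large_jump_weight p)" "integrable V (small_jump_weight q)"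
    using assms by (auto intro!: integrableI_nonneg
        simp: M_class_def large_jump_weight_def small_jump_weight_def)
qed

definition levy_integrand :: "real \<Rightarrow> real \<Rightarrow> complex" where
  "levy_integrand \<omega> a = cis (\<omega> * a) - 1 - \<i> * complex_of_real (\<omega> * a * indicator {a. \<bar>a\<bar> < 1} a)"

lemma levy_exponent_eq_integral: "levy_exponent V \<omega> = (LINT a|V. levy_integrand \<omega> a)"
  by (simp add: levy_exponent_def levy_integrand_def)

lemma borel_measurable_levy_integrand: "levy_integrand \<omega> \<in> borel_measurable borel"
  unfolding levy_integrand_def cis_conv_exp by measurable

lemma levy_integrand_plus_reflect:
  "levy_integrand \<omega> a + levy_integrand \<omega> (- a) = 2 * complex_of_real (cos (\<omega> * a) - 1)"
  by (simp add: levy_integrand_def complex_eq_iff indicator_def)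

lemma norm_levy_integrand_le_min: "cmod (levy_integrand \<omega> a) \<le> (\<omega>\<^sup>2 / 2 + 2) * min 1 (a\<^sup>2)"
proof (cases "\<bar>a\<bar> < 1")
  case True
  then have "cmod (levy_integrand \<omega> a) \<le> \<omega>\<^sup>2 / 2 * a\<^sup>2"
    using norm_cis_minus_one_minus_linear_le[of "\<omega> * a"]
    by (simp add: levy_integrand_def power_mult_distrib)
  moreover have "a\<^sup>2 \<le> 1" using True by (simp add: abs_square_le_1)
  moreover have "\<omega>\<^sup>2 / 2 * a\<^sup>2 \<le> (\<omega>\<^sup>2 / 2 + 2) * a\<^sup>2" by (simp add: distrib_right)
  ultimately show ?thesis by (simp add: min_def)
next
  case False
  then have "1 \<le> a\<^sup>2" using abs_square_less_1[of a] by linarith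
  moreover have "cmod (levy_integrand \<omega> a) \<le> 2"
    using False norm_cis_minus_one_le_two[of "\<omega> * a"] by (simp add: levy_integrand_def)
  moreover have "0 \<le> \<omega>\<^sup>2 / 2" by simp
  ultimately show ?thesis by (simp only: min_absorb1 mult_1_right)
qed

lemma integrable_levy_integrand:
  assumes "levy_measure V"
  shows "integrable V (levy_integrand \<omega>)"
proof (rule Bochner_Integration.integrable_bound[where f = "\<lambda>a. (\<omega>\<^sup>2 / 2 + 2) * min 1 (a\<^sup>2)"])
  have sets: "sets V = sets borel" using assms by (simp add: levy_measure_def)
  show "levy_integrand \<omega> \<in> borel_measurable V"
    using borel_measurable_levy_integrand measurable_cong_sets[OF sets refl] by blast
  have "integrable V (\<lambda>a. min 1 (a\<^sup>2))"
    using assms by (intro integrableI_nonneg) (auto simp: levy_measure_def measurable_cong_sets[OF sets refl])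
  then show "integrable V (\<lambda>a. (\<omega>\<^sup>2 / 2 + 2) * min 1 (a\<^sup>2))" by simp
  show "AE a in V. norm (levy_integrand \<omega> a) \<le> norm ((\<omega>\<^sup>2 / 2 + 2) * min 1 (a\<^sup>2))"
    using norm_levy_integrand_le_min by simp
qed

lemma distr_uminus_symmetric_measure:
  fixes V :: "real measure"
  assumes "sets V = sets borel" "symmetric_measure V"
  shows "distr V borel uminus = V"
proof (rule measure_eqI)
  show "sets (distr V borel uminus) = sets V" using assms by simp
  fix B assume "B \<in> sets (distr V borel uminus)"
  then have B: "B \<in> sets borel" by simp
  have "space V = UNIV" using assms(1) sets_eq_imp_space_eq by fastforce
  moreover have "uminus -` B = uminus ` B" by (force simp: image_iff)
  moreover have "uminus \<in> measurable V borel" using assms(1) measurable_cong_sets by fastforce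
  ultimately show "emeasure (distr V borel uminus) B = emeasure V B"
    using B assms(2) by (simp add: emeasure_distr symmetric_measure_def)
qed

lemma integral_symmetric_measure_reflect:
  fixes V :: "real measure" and f :: "real \<Rightarrow> 'b::{banach, second_countable_topology}"
  assumes "sets V = sets borel" "symmetric_measure V"
    and "integrable V f" "f \<in> borel_measurable borel"
  shows "(LINT a|V. f a + f (- a)) = 2 *\<^sub>R (LINT a|V. f a)"
proof -
  have uminus: "uminus \<in> measurable V borel" using assms(1) measurable_cong_sets by fastforce
  note distr = distr_uminus_symmetric_measure[OF assms(1,2)]
  have "integrable V (\<lambda>a. f (- a))"
    using integrable_distr_eq[OF uminus assms(4)] assms(3) distr by simp
  moreover have "(LINT a|V. f (- a)) = (LINT a|V. f a)"
    using integral_distr[OF uminus assms(4)] distr by simp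
  ultimately show ?thesis using assms(3) by (simp add: scaleR_2)
qed

lemma levy_exponent_symmetric:
  assumes "levy_measure V" "symmetric_measure V"
  shows "levy_exponent V \<omega> = (LINT a|V. complex_of_real (cos (\<omega> * a) - 1))"
proof -
  have sets: "sets V = sets borel" using assms(1) by (simp add: levy_measure_def)
  have "2 * levy_exponent V \<omega> = (LINT a|V. levy_integrand \<omega> a + levy_integrand \<omega> (- a))"
    using integral_symmetric_measure_reflect[OF sets assms(2) integrable_levy_integrand[OF assms(1)]
        borel_measurable_levy_integrand]
    by (simp add: levy_exponent_eq_integral scaleR_conv_of_real)
  also have "\<dots> = 2 * (LINT a|V. complex_of_real (cos (\<omega> * a) - 1))"
    by (simp only: levy_integrand_plus_reflect integral_mult_right_zero)
  finally show ?thesis by simp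
qed

lemma norm_levy_integrand_le_jump_weights:
  assumes "0 \<le> m" "m \<le> 1" "1 \<le> M" "M \<le> 2"
  shows "cmod (levy_integrand \<omega> a) \<le>
    3 * (\<bar>\<omega>\<bar> powr m * large_jump_weight m a + \<bar>\<omega>\<bar> powr M * small_jump_weight M a)"
proof (cases "1 \<le> \<bar>a\<bar>")
  case True
  then have F: "levy_integrand \<omega> a = cis (\<omega> * a) - 1" by (simp add: levy_integrand_def)
  have "cmod (levy_integrand \<omega> a) \<le> 3 * \<bar>\<omega> * a\<bar> powr m"
  proof (rule le_powr_interpolate[of 0 m 1])
    show "cmod (levy_integrand \<omega> a) \<le> 3 * \<bar>\<omega> * a\<bar> powr 1"
      using F norm_cis_minus_one_le[of "\<omega> * a"] by simp
    show "cmod (levy_integrand \<omega> a) \<le> 3 * \<bar>\<omega> * a\<bar> powr 0" if "1 \<le> \<bar>\<omega> * a\<bar>"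
      using F norm_cis_minus_one_le_two[of "\<omega> * a"] that by simp
  qed (use assms in auto)
  then show ?thesis
    using True by (simp add: large_jump_weight_def small_jump_weight_def abs_mult powr_mult)
next
  case False
  then have F: "levy_integrand \<omega> a = cis (\<omega> * a) - 1 - \<i> * complex_of_real (\<omega> * a)"
    by (simp add: levy_integrand_def)
  have "cmod (levy_integrand \<omega> a) \<le> 3 * \<bar>\<omega> * a\<bar> powr M"
  proof (rule le_powr_interpolate[of 1 M 2])
    have "cmod (levy_integrand \<omega> a) \<le> (\<omega> * a)\<^sup>2 / 2"
      using F norm_cis_minus_one_minus_linear_le[of "\<omega> * a"] by simp
    also have "\<dots> \<le> 3 * \<bar>\<omega> * a\<bar> powr 2" by simp
    finally show "cmod (levy_integrand \<omega> a) \<le> 3 * \<bar>\<omega> * a\<bar> powr 2" .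
    have "cmod (levy_integrand \<omega> a) \<le> cmod (cis (\<omega> * a) - 1) + cmod (\<i> * complex_of_real (\<omega> * a))"
      unfolding F by (rule norm_triangle_ineq4)
    also have "\<dots> \<le> 2 + \<bar>\<omega> * a\<bar>"
      using norm_cis_minus_one_le_two[of "\<omega> * a"] by (simp add: norm_mult)
    finally show "cmod (levy_integrand \<omega> a) \<le> 3 * \<bar>\<omega> * a\<bar> powr 1" if "1 \<le> \<bar>\<omega> * a\<bar>"
      using that by simp
  qed (use assms in auto)
  then show ?thesis
    using False by (cases "a = 0")
      (auto simp: large_jump_weight_def small_jump_weight_def abs_mult powr_mult levy_integrand_def)
qed

lemma abs_cos_minus_one_le_jump_weights:
  assumes "0 \<le> m" "m \<le> 2" "0 \<le> M" "M \<le> 2"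
  shows "\<bar>cos (\<omega> * a) - 1\<bar> \<le>
    2 * (\<bar>\<omega>\<bar> powr m * large_jump_weight m a + \<bar>\<omega>\<bar> powr M * small_jump_weight M a)"
proof -
  have bound: "\<bar>cos (\<omega> * a) - 1\<bar> \<le> 2 * \<bar>\<omega>\<bar> powr r * \<bar>a\<bar> powr r" if "0 \<le> r" "r \<le> 2" for r
  proof -
    have "\<bar>cos (\<omega> * a) - 1\<bar> \<le> 2 * \<bar>\<omega> * a\<bar> powr r"
    proof (rule le_powr_interpolate[of 0 r 2])
      have "\<bar>cos (\<omega> * a) - 1\<bar> \<le> (\<omega> * a)\<^sup>2 / 2" by (rule abs_cos_minus_one_le)
      also have "\<dots> \<le> 2 * \<bar>\<omega> * a\<bar> powr 2" by simp
      finally show "\<bar>cos (\<omega> * a) - 1\<bar> \<le> 2 * \<bar>\<omega> * a\<bar> powr 2" .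
      show "\<bar>cos (\<omega> * a) - 1\<bar> \<le> 2 * \<bar>\<omega> * a\<bar> powr 0" if "1 \<le> \<bar>\<omega> * a\<bar>"
        using that cos_ge_minus_one[of "\<omega> * a"] cos_le_one[of "\<omega> * a"] by simp
    qed (use that in auto)
    then show ?thesis by (simp add: abs_mult powr_mult)
  qed
  show ?thesis
  proof (cases "1 \<le> \<bar>a\<bar>")
    case True
    then show ?thesis
      using bound[of m] assms by (simp add: large_jump_weight_def small_jump_weight_def)
  next
    case False
    then show ?thesis
      using bound[of M] assms
      by (cases "a = 0") (auto simp: large_jump_weight_def small_jump_weight_def)
  qed
qed

lemma norm_integral_le_of_norm_le:
  fixes F :: "'a \<Rightarrow> 'b::{banach, second_countable_topology}"
  assumes "integrable V g" "\<And>a. norm (F a) \<le> g a"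
  shows "norm (LINT a|V. F a) \<le> (LINT a|V. g a)"
proof (cases "integrable V F")
  case True
  have "norm (LINT a|V. F a) \<le> (LINT a|V. norm (F a))" by (rule integral_norm_bound)
  also have "\<dots> \<le> (LINT a|V. g a)" using True assms by (intro integral_mono) auto
  finally show ?thesis .
next
  case False
  have "0 \<le> (LINT a|V. g a)" using assms(2) by (intro integral_nonneg_AE AE_I2 order_trans[OF norm_ge_zero])
  then show ?thesis using False by (simp add: not_integrable_integral_eq)
qed

lemma norm_levy_exponent_le_jump_moments:
  assumes "levy_measure V" "0 \<le> m" "m \<le> 2" "0 \<le> M" "M \<le> 2"
    and "symmetric_measure V \<or> m \<le> 1 \<and> 1 \<le> M"
    and "integrable V (large_jump_weight m)" "integrable V (small_jump_weight M)"
  shows "cmod (levy_exponent V \<omega>) \<le>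
    3 * (LINT a|V. large_jump_weight m a) * \<bar>\<omega>\<bar> powr m +
    3 * (LINT a|V. small_jump_weight M a) * \<bar>\<omega>\<bar> powr M"
proof -
  let ?g = "\<lambda>a. 3 * (\<bar>\<omega>\<bar> powr m * large_jump_weight m a + \<bar>\<omega>\<bar> powr M * small_jump_weight M a)"
  have pointwise: "cmod (levy_exponent V \<omega>) \<le> (LINT a|V. ?g a)"
  proof (cases "symmetric_measure V")
    case True
    have "cmod (complex_of_real (cos (\<omega> * a) - 1)) \<le> ?g a" for a
    proof -
      have "0 \<le> \<bar>\<omega>\<bar> powr m * large_jump_weight m a + \<bar>\<omega>\<bar> powr M * small_jump_weight M a"
        by (simp add: large_jump_weight_nonneg small_jump_weight_nonneg)
      then show ?thesis
        unfolding norm_of_real using abs_cos_minus_one_le_jump_weights[of m M \<omega> a] assms(2-5)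
        by linarith
    qed
    then show ?thesis
      unfolding levy_exponent_symmetric[OF assms(1) True]
      by (rule norm_integral_le_of_norm_le[rotated]) (simp add: assms(7,8))
  next
    case False
    then show ?thesis
      unfolding levy_exponent_eq_integral
      using assms norm_levy_integrand_le_jump_weights by (intro norm_integral_le_of_norm_le) auto
  qed
  then show ?thesis using assms(7,8) by (simp add: algebra_simps)
qed

theorem corollary3p13:
  fixes V :: "real measure" and p q :: real
  assumes "levy_measure V"
    and "0 < p" and "p \<le> q" and "q \<le> 2"
  defines "A \<equiv> {p, q} \<union> (if symmetric_measure V then {} else {1})"
  assumes "V \<in> M_class (Min A) (Max A)"
  shows "\<exists>\<kappa>1 \<kappa>2. \<kappa>1 \<ge> 0 \<and> \<kappa>2 \<ge> 0 \<and>
     (\<forall>\<omega>::real. cmod (levy_exponent V \<omega>) \<le> \<kappa>1 * \<bar>\<omega>\<bar> powr (Min A) + \<kappa>2 * \<bar>\<omega>\<bar> powr (Max A))"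
proof -
  have A: "finite A" "A \<noteq> {}" "\<And>r. r \<in> A \<Longrightarrow> 0 < r \<and> r \<le> 2"
    using assms(2-4) by (auto simp: A_def split: if_splits)
  have range: "0 \<le> Min A" "Min A \<le> 2" "0 \<le> Max A" "Max A \<le> 2"
    using A(3)[OF Min_in[OF A(1,2)]] A(3)[OF Max_in[OF A(1,2)]] by auto
  have "symmetric_measure V \<or> Min A \<le> 1 \<and> 1 \<le> Max A"
    using Min_le[OF A(1)] Max_ge[OF A(1)] by (auto simp: A_def)
  note bound = norm_levy_exponent_le_jump_moments[OF assms(1) range this
      M_class_integrable_jump_weights[OF assms(6)]]
  moreover have "0 \<le> 3 * (LINT a|V. large_jump_weight (Min A) a)"
    "0 \<le> 3 * (LINT a|V. small_jump_weight (Max A) a)"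
    by (simp_all add: integral_nonneg_AE large_jump_weight_nonneg small_jump_weight_nonneg)
  ultimately show ?thesis by blast
qed

end
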